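(* Let $X$ be a real Banach space, $\varepsilon>0$, $A\subseteq X$ bounded, nonempty and non-$\varepsilon$-dentable, and $C=\overline{\operatorname{co}}(A)$. Let $S_0$ be a slice of $C$, $D\subseteq C$ with $\alpha(D)<\varepsilon$, and $\gamma\in(0,1)$. Let $\mathcal S(S_0,D)$ be the collection of all slices $S$ of $C$ with $S\subseteq S_0\setminus D$, and let $\Lambda=\Lambda(S_0,D,\gamma)$ be the union of all $\gamma$-shallow parallels $S^\gamma$ of slices $S\in\mathcal S(S_0,D)$. Then $$C=\overline{\operatorname{co}}\big((C\setminus S_0)\cup(\Lambda\cap A)\big).$$
   Context: $\overline{\operatorname{co}}$ is the norm-closed convex hull. The Kuratowski measure of noncompactness $\alpha(E)$ is the infimum of all $\varepsilon>0$ such that $E$ can be covered by finitely many sets of diameter at most $\varepsilon$. For bounded nonempty $E\subseteq X$, $f$ in the closed unit ball of $X^*$ and $\delta>0$, the slice $S(f,E,\delta)=\{e\in E: f(e)>\sup f(E)-\delta\}$; a slice of $E$ is any set of this form. A bounded set is non-$\varepsilon$-dentable if every slice has diameter $>\varepsilon$. For $\gamma\in(0,1)$ and a slice $S=S(f,C,\delta)$ of $C$ (taken with a defining pair $(f,\delta)$; all such representations are included), its $\gamma$-shallow parallel is $S^\gamma=S(f,C,\gamma\delta/2)$. *)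

theory Defs
  imports "HOL-Analysis.Analysis"
begin

definition slice :: "('a::real_normed_vector \<Rightarrow>\<^sub>L real) \<Rightarrow> 'a set \<Rightarrow> real \<Rightarrow> 'a set" where
  "slice f E \<delta> = {e \<in> E. blinfun_apply f e > (SUP x\<in>E. blinfun_apply f x) - \<delta>}"

definition is_slice :: "'a::real_normed_vector set \<Rightarrow> 'a set \<Rightarrow> bool" where
  "is_slice S E \<longleftrightarrow> (\<exists>f \<delta>. norm f \<le> 1 \<and> \<delta> > 0 \<and> S = slice f E \<delta>)"

definition non_dentable :: "real \<Rightarrow> 'a::real_normed_vector set \<Rightarrow> bool" where
  "non_dentable \<epsilon> E \<longleftrightarrow> (\<forall>S. is_slice S E \<longrightarrow> diameter S > \<epsilon>)"

definition kuratowski :: "'a::real_normed_vector set \<Rightarrow> real" where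
  "kuratowski E = Inf {e. e > 0 \<and> (\<exists>F. finite F \<and> E \<subseteq> \<Union>F \<and> (\<forall>T\<in>F. bounded T \<and> diameter T \<le> e))}"

text \<open>Lambda(S0,D,gamma): union of the gamma-shallow parallels slice f C (gamma*delta/2) over all
  representations (f,delta) of slices of C contained in S0 - D.\<close>
definition shallow_union :: "'a::real_normed_vector set \<Rightarrow> 'a set \<Rightarrow> 'a set \<Rightarrow> real \<Rightarrow> 'a set" where
  "shallow_union C S0 D \<gamma> = \<Union>{slice f C (\<gamma> * \<delta> / 2) | f \<delta>.
      norm f \<le> 1 \<and> \<delta> > 0 \<and> slice f C \<delta> \<subseteq> S0 - D}"

end

theory Submission
  imports Defs
begin

text \<open>Suppose a point \<open>x \<in> C\<close> lies outside the closed convex hull of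
  \<open>W = (C - S\<^sub>0) \<union> (\<Lambda> \<inter> A)\<close>. Hahn--Banach separation gives a slice \<open>T\<close> of \<open>C\<close> that contains
  \<open>x\<close> and misses \<open>W\<close>, so \<open>T \<subseteq> S\<^sub>0\<close>. Every slice of \<open>C\<close> contains a slice of \<open>C\<close> missing \<open>D\<close>:
  otherwise \<open>C\<close> is the closed convex hull of \<open>(C - T) \<union> D\<close>, and as \<open>D\<close> is covered by finitely
  many sets of diameter \<open>< \<epsilon>\<close> these can be dropped one at a time. Indeed, if \<open>C\<close> is spanned
  by \<open>X \<union> W'\<close> with \<open>diam X < \<epsilon>\<close> but not by \<open>W'\<close>, take a functional separating \<open>W'\<close> from the
  top of \<open>C\<close>; near the top, \<open>C\<close> stays close to the convex hull of \<open>X\<close>, which yields a slice of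
  \<open>A\<close> of diameter \<open>\<le> \<epsilon>\<close>. So some slice \<open>S \<subseteq> T - D \<subseteq> S\<^sub>0 - D\<close> exists. Its shallow parallel
  \<open>S\<^sup>\<gamma>\<close> meets \<open>A\<close> (slices of \<open>A\<close> and of \<open>C\<close> are cut at the same level), and such a point lies in
  \<open>\<Lambda> \<inter> A \<subseteq> W\<close> and in \<open>T\<close>: a contradiction.\<close>

section \<open>The Hahn--Banach theorem\<close>

definition sublinear :: "('a::real_vector \<Rightarrow> real) \<Rightarrow> bool" where
  "sublinear p \<longleftrightarrow> (\<forall>x y. p (x + y) \<le> p x + p y) \<and> (\<forall>c x. 0 < c \<longrightarrow> p (c *\<^sub>R x) = c * p x)"

lemma sublinearD:
  assumes "sublinear p"
  shows sublinear_add: "p (x + y) \<le> p x + p y"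
    and sublinear_scaleR: "0 < c \<Longrightarrow> p (c *\<^sub>R x) = c * p x"
  using assms unfolding sublinear_def by blast+

lemma sublinear_zero: "sublinear p \<Longrightarrow> p 0 = 0"
  using sublinear_scaleR[of p 2 0] by simp

definition dominated_graph :: "('a::real_vector \<Rightarrow> real) \<Rightarrow> ('a \<times> real) set \<Rightarrow> bool" where
  "dominated_graph p G \<longleftrightarrow>
     (\<forall>x a y b. (x, a) \<in> G \<longrightarrow> (y, b) \<in> G \<longrightarrow> (x + y, a + b) \<in> G) \<and>
     (\<forall>x a r. (x, a) \<in> G \<longrightarrow> (r *\<^sub>R x, r * a) \<in> G) \<and>
     (\<forall>x a b. (x, a) \<in> G \<longrightarrow> (x, b) \<in> G \<longrightarrow> a = b) \<and>
     (\<forall>x a. (x, a) \<in> G \<longrightarrow> a \<le> p x)"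

lemma dominated_graphD:
  assumes "dominated_graph p G"
  shows dominated_graph_add: "(x, a) \<in> G \<Longrightarrow> (y, b) \<in> G \<Longrightarrow> (x + y, a + b) \<in> G"
    and dominated_graph_scaleR: "(x, a) \<in> G \<Longrightarrow> (r *\<^sub>R x, r * a) \<in> G"
    and dominated_graph_unique: "(x, a) \<in> G \<Longrightarrow> (x, b) \<in> G \<Longrightarrow> a = b"
    and dominated_graph_le: "(x, a) \<in> G \<Longrightarrow> a \<le> p x"
  using assms unfolding dominated_graph_def by blast+

lemma dominated_graph_Union_chain:
  assumes Ch: "Ch \<in> chains {G. dominated_graph p G}"
  shows "dominated_graph p (\<Union>Ch)"
proof -
  have dom: "dominated_graph p G" if "G \<in> Ch" for G
    using chainsD2[OF Ch] that by auto
  have common: "\<exists>G\<in>Ch. u \<in> G \<and> v \<in> G" if uv: "u \<in> \<Union>Ch" "v \<in> \<Union>Ch" for u v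
  proof -
    obtain G H where "G \<in> Ch" "H \<in> Ch" "u \<in> G" "v \<in> H" using uv by blast
    moreover from this have "G \<subseteq> H \<or> H \<subseteq> G" using chainsD[OF Ch] by blast
    ultimately show ?thesis by blast
  qed
  show ?thesis
    unfolding dominated_graph_def
  proof (intro conjI allI impI)
    fix x a y b assume "(x, a) \<in> \<Union>Ch" "(y, b) \<in> \<Union>Ch"
    then obtain G where "G \<in> Ch" "(x, a) \<in> G" "(y, b) \<in> G" using common by blast
    then show "(x + y, a + b) \<in> \<Union>Ch" using dominated_graph_add[OF dom] by blast
  next
    fix x a r assume "(x, a) \<in> \<Union>Ch"
    then show "(r *\<^sub>R x, r * a) \<in> \<Union>Ch" using dominated_graph_scaleR[OF dom] by blast
  next
    fix x a b assume "(x, a) \<in> \<Union>Ch" "(x, b) \<in> \<Union>Ch"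
    then obtain G where "G \<in> Ch" "(x, a) \<in> G" "(x, b) \<in> G" using common by blast
    then show "a = b" using dominated_graph_unique[OF dom] by blast
  next
    fix x a assume "(x, a) \<in> \<Union>Ch"
    then show "a \<le> p x" using dominated_graph_le[OF dom] by blast
  qed
qed

lemma dominated_graph_extension_value:
  assumes p: "sublinear p" and M: "dominated_graph p M" and M0: "(0, 0) \<in> M"
  shows "\<exists>c. \<forall>x a. (x, a) \<in> M \<longrightarrow> a - p (x - y) \<le> c \<and> c \<le> p (x + y) - a"
proof -
  define L where "L = {a - p (x - y) | x a. (x, a) \<in> M}"
  have L_le: "l \<le> p (x' + y) - a'" if "l \<in> L" "(x', a') \<in> M" for l x' a'
  proof -
    obtain x a where l: "l = a - p (x - y)" "(x, a) \<in> M"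
      using \<open>l \<in> L\<close> unfolding L_def by blast
    have "a + a' \<le> p (x + x')"
      using dominated_graph_le[OF M dominated_graph_add[OF M l(2) that(2)]] .
    also have "\<dots> \<le> p (x - y) + p (x' + y)"
      using sublinear_add[OF p, of "x - y" "x' + y"] by simp
    finally show ?thesis using l by simp
  qed
  have "L \<noteq> {}" unfolding L_def using M0 by blast
  moreover have "bdd_above L" using L_le[OF _ M0] by (intro bdd_aboveI[of L "p y"]) simp
  ultimately show ?thesis
  proof (intro exI[of _ "Sup L"] allI impI conjI)
    fix x a assume "(x, a) \<in> M"
    then have "a - p (x - y) \<in> L" unfolding L_def by blast
    then show "a - p (x - y) \<le> Sup L" using \<open>bdd_above L\<close> by (rule cSup_upper)
    show "Sup L \<le> p (x + y) - a" using \<open>L \<noteq> {}\<close> L_le[OF _ \<open>(x, a) \<in> M\<close>] by (rule cSup_least)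
  qed
qed

lemma dominated_graph_extension_le:
  assumes p: "sublinear p" and M: "dominated_graph p M" and xa: "(x, a) \<in> M"
    and c: "\<And>x a. (x, a) \<in> M \<Longrightarrow> a - p (x - y) \<le> c \<and> c \<le> p (x + y) - a"
  shows "a + t * c \<le> p (x + t *\<^sub>R y)"
proof (cases t "0::real" rule: linorder_cases)
  case equal
  then show ?thesis using dominated_graph_le[OF M xa] by simp
next
  case greater
  have "c \<le> p ((1 / t) *\<^sub>R x + y) - (1 / t) * a"
    using c[OF dominated_graph_scaleR[OF M xa]] by blast
  then have "t * c \<le> t * p ((1 / t) *\<^sub>R x + y) - a"
    using greater by (simp add: field_simps)
  also have "t * p ((1 / t) *\<^sub>R x + y) = p (x + t *\<^sub>R y)"
    using sublinear_scaleR[OF p greater, of "(1 / t) *\<^sub>R x + y"] greater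
    by (simp add: scaleR_add_right)
  finally show ?thesis by simp
next
  case less
  then have s: "0 < - t" by simp
  have "(- 1 / t) * a - p ((- 1 / t) *\<^sub>R x - y) \<le> c"
    using c[OF dominated_graph_scaleR[OF M xa]] by blast
  then have "a - (- t) * p ((- 1 / t) *\<^sub>R x - y) \<le> - t * c"
    using less by (simp add: field_simps)
  also have "(- t) * p ((- 1 / t) *\<^sub>R x - y) = p (x + t *\<^sub>R y)"
    using sublinear_scaleR[OF p s, of "(- 1 / t) *\<^sub>R x - y"] less
    by (simp add: scaleR_diff_right)
  finally show ?thesis by simp
qed

lemma dominated_graph_extend:
  assumes p: "sublinear p" and M: "dominated_graph p M" and y: "\<And>a. (y, a) \<notin> M"
    and c: "\<And>x a. (x, a) \<in> M \<Longrightarrow> a - p (x - y) \<le> c \<and> c \<le> p (x + y) - a"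
  shows "dominated_graph p {(x + t *\<^sub>R y, a + t * c) | x a t. (x, a) \<in> M}"
    (is "dominated_graph p ?M'")
  unfolding dominated_graph_def
proof (intro conjI allI impI)
  fix u a v b assume "(u, a) \<in> ?M'" "(v, b) \<in> ?M'"
  then obtain x1 a1 t1 x2 a2 t2 where "u = x1 + t1 *\<^sub>R y" "a = a1 + t1 * c" "(x1, a1) \<in> M"
    "v = x2 + t2 *\<^sub>R y" "b = a2 + t2 * c" "(x2, a2) \<in> M" by blast
  moreover have "(u + v, a + b) = ((x1 + x2) + (t1 + t2) *\<^sub>R y, (a1 + a2) + (t1 + t2) * c)"
    using calculation by (simp add: algebra_simps)
  ultimately show "(u + v, a + b) \<in> ?M'" using dominated_graph_add[OF M] by blast
next
  fix u a r assume "(u, a) \<in> ?M'"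
  then obtain x1 a1 t1 where "u = x1 + t1 *\<^sub>R y" "a = a1 + t1 * c" "(x1, a1) \<in> M" by blast
  moreover have "(r *\<^sub>R u, r * a) = (r *\<^sub>R x1 + (r * t1) *\<^sub>R y, r * a1 + (r * t1) * c)"
    using calculation by (simp add: algebra_simps)
  ultimately show "(r *\<^sub>R u, r * a) \<in> ?M'" using dominated_graph_scaleR[OF M] by blast
next
  fix u a b assume "(u, a) \<in> ?M'" "(u, b) \<in> ?M'"
  then obtain x1 a1 t1 x2 a2 t2 where e: "u = x1 + t1 *\<^sub>R y" "a = a1 + t1 * c" "(x1, a1) \<in> M"
    "u = x2 + t2 *\<^sub>R y" "b = a2 + t2 * c" "(x2, a2) \<in> M" by blast
  have "t1 = t2"
  proof (rule ccontr)
    assume "t1 \<noteq> t2"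
    have "(x1 + (- 1) *\<^sub>R x2, a1 + (- 1) * a2) \<in> M"
      using dominated_graph_add[OF M e(3) dominated_graph_scaleR[OF M e(6)]] .
    from dominated_graph_scaleR[OF M this, of "1 / (t2 - t1)"]
    have "((1 / (t2 - t1)) *\<^sub>R (x1 - x2), (1 / (t2 - t1)) * (a1 - a2)) \<in> M" by simp
    moreover have "x1 - x2 = (t2 - t1) *\<^sub>R y" using e(1,4) by (simp add: algebra_simps)
    ultimately show False using y \<open>t1 \<noteq> t2\<close> by simp
  qed
  then show "a = b" using e dominated_graph_unique[OF M] by auto
next
  fix u a assume "(u, a) \<in> ?M'"
  then show "a \<le> p u" using dominated_graph_extension_le[OF p M _ c] by blast
qed

theorem sublinear_dominates_linear:
  fixes p :: "'a::real_vector \<Rightarrow> real"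
  assumes p: "sublinear p"
  shows "\<exists>f. linear f \<and> (\<forall>x. f x \<le> p x)"
proof -
  obtain M where M: "dominated_graph p M"
    and max: "\<And>G. dominated_graph p G \<Longrightarrow> M \<subseteq> G \<Longrightarrow> G = M"
    using Zorn_Lemma[of "{G. dominated_graph p G}"] dominated_graph_Union_chain by blast
  have "dominated_graph p {(0, 0)}"
    unfolding dominated_graph_def using sublinear_zero[OF p] by simp
  then have "M \<noteq> {}" using max by blast
  then obtain x a where "(x, a) \<in> M" by auto
  from dominated_graph_scaleR[OF M this, of 0] have M0: "(0, 0) \<in> M" by simp
  have total: "\<exists>a. (y, a) \<in> M" for y
  proof (rule ccontr)
    assume "\<nexists>a. (y, a) \<in> M"
    moreover obtain c where "\<And>x a. (x, a) \<in> M \<Longrightarrow> a - p (x - y) \<le> c \<and> c \<le> p (x + y) - a"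
      using dominated_graph_extension_value[OF p M M0] by blast
    ultimately have "dominated_graph p {(x + t *\<^sub>R y, a + t * c) | x a t. (x, a) \<in> M}"
      (is "dominated_graph p ?M'") using dominated_graph_extend[OF p M] by blast
    moreover have "M \<subseteq> ?M'"
    proof (rule subrelI)
      fix x a assume "(x, a) \<in> M"
      moreover have "(x, a) = (x + 0 *\<^sub>R y, a + 0 * c)" by simp
      ultimately show "(x, a) \<in> ?M'" by blast
    qed
    moreover have "(y, c) \<in> ?M'"
    proof -
      have "(y, c) = (0 + 1 *\<^sub>R y, 0 + 1 * c)" by simp
      then show ?thesis using M0 by blast
    qed
    ultimately show False using max \<open>\<nexists>a. (y, a) \<in> M\<close> by blast
  qed
  define f where "f y = (THE a. (y, a) \<in> M)" for y
  have fM: "(y, f y) \<in> M" for y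
  proof -
    obtain a where "(y, a) \<in> M" using total by blast
    moreover from this have "f y = a"
      unfolding f_def using dominated_graph_unique[OF M] by blast
    ultimately show ?thesis by simp
  qed
  have "linear f"
  proof
    show "f (x + y) = f x + f y" for x y
      using dominated_graph_unique[OF M fM dominated_graph_add[OF M fM fM]] .
    show "f (r *\<^sub>R x) = r *\<^sub>R f x" for r x
      using dominated_graph_unique[OF M fM dominated_graph_scaleR[OF M fM]] by simp
  qed
  moreover have "f x \<le> p x" for x using dominated_graph_le[OF M fM] .
  ultimately show ?thesis by blast
qed


text \<open>A sublinear functional bounded by the norm and by \<open>-d\<close> on the directions \<open>K - x\<close>, so that
  any linear functional below it separates \<open>x\<close> from \<open>K\<close> by \<open>d\<close>.\<close>
definition separation_gauge :: "'a::real_normed_vector set \<Rightarrow> 'a \<Rightarrow> real \<Rightarrow> 'a \<Rightarrow> real" where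
  "separation_gauge K x d y = Inf {norm (y - l *\<^sub>R (k - x)) - l * d | l k. 0 \<le> l \<and> k \<in> K}"

context
  fixes K :: "'a::real_normed_vector set" and x :: 'a and d :: real
  assumes far: "\<forall>k\<in>K. d \<le> norm (k - x)"
begin

lemma separation_gauge_le:
  assumes "0 \<le> l" "k \<in> K"
  shows "separation_gauge K x d y \<le> norm (y - l *\<^sub>R (k - x)) - l * d"
  unfolding separation_gauge_def
proof (rule cInf_lower)
  show "norm (y - l *\<^sub>R (k - x)) - l * d \<in> {norm (y - l *\<^sub>R (k - x)) - l * d | l k. 0 \<le> l \<and> k \<in> K}"
    using assms by blast
  have "- norm y \<le> norm (y - l *\<^sub>R (k - x)) - l * d" if "0 \<le> l" "k \<in> K" for l k
  proof -
    have "l * d \<le> norm (l *\<^sub>R (k - x))" using far that by (simp add: mult_left_mono)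
    also have "\<dots> \<le> norm (y - l *\<^sub>R (k - x)) + norm y"
      using norm_triangle_ineq4[of y "y - l *\<^sub>R (k - x)"] by simp
    finally show ?thesis by simp
  qed
  then show "bdd_below {norm (y - l *\<^sub>R (k - x)) - l * d | l k. 0 \<le> l \<and> k \<in> K}"
    by (intro bdd_belowI[of _ "- norm y"]) blast
qed

lemma separation_gauge_greatest:
  assumes "K \<noteq> {}" "\<And>l k. 0 \<le> l \<Longrightarrow> k \<in> K \<Longrightarrow> c \<le> norm (y - l *\<^sub>R (k - x)) - l * d"
  shows "c \<le> separation_gauge K x d y"
  unfolding separation_gauge_def
proof (rule cInf_greatest)
  obtain k where "k \<in> K" using assms(1) by blast
  then show "{norm (y - l *\<^sub>R (k - x)) - l * d | l k. 0 \<le> l \<and> k \<in> K} \<noteq> {}" by force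
qed (use assms(2) in blast)

lemma separation_gauge_le_norm: "K \<noteq> {} \<Longrightarrow> separation_gauge K x d y \<le> norm y"
  using separation_gauge_le[of 0] by fastforce

lemma separation_gauge_direction: "k \<in> K \<Longrightarrow> separation_gauge K x d (k - x) \<le> - d"
  using separation_gauge_le[of 1 k "k - x"] by simp

lemma separation_gauge_add:
  assumes "convex K" "K \<noteq> {}"
  shows "separation_gauge K x d (y1 + y2) \<le> separation_gauge K x d y1 + separation_gauge K x d y2"
proof -
  let ?g = "separation_gauge K x d"
  have "?g (y1 + y2) \<le> (norm (y1 - l1 *\<^sub>R (k1 - x)) - l1 * d) + (norm (y2 - l2 *\<^sub>R (k2 - x)) - l2 * d)"
    if "0 \<le> l1" "k1 \<in> K" "0 \<le> l2" "k2 \<in> K" for l1 k1 l2 k2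
  proof (cases "l1 + l2 = 0")
    case True
    then have "l1 = 0" "l2 = 0" using that by auto
    then show ?thesis
      using separation_gauge_le_norm[OF assms(2), of "y1 + y2"] norm_triangle_ineq[of y1 y2] by simp
  next
    case False
    define l where "l = l1 + l2"
    then have "0 < l" using False that by simp
    define k where "k = (l1 / l) *\<^sub>R k1 + (l2 / l) *\<^sub>R k2"
    have "k \<in> K"
      unfolding k_def using \<open>0 < l\<close> that by (intro convexD[OF assms(1)]) (auto simp: l_def add_divide_distrib[symmetric])
    have "l *\<^sub>R k = l1 *\<^sub>R k1 + l2 *\<^sub>R k2"
      using \<open>0 < l\<close> by (simp add: k_def scaleR_add_right)
    then have "l *\<^sub>R (k - x) = l1 *\<^sub>R (k1 - x) + l2 *\<^sub>R (k2 - x)"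
      by (simp add: l_def algebra_simps)
    then have "y1 + y2 - l *\<^sub>R (k - x) = (y1 - l1 *\<^sub>R (k1 - x)) + (y2 - l2 *\<^sub>R (k2 - x))"
      by (simp add: algebra_simps)
    moreover have "?g (y1 + y2) \<le> norm (y1 + y2 - l *\<^sub>R (k - x)) - l * d"
      using separation_gauge_le \<open>0 < l\<close> \<open>k \<in> K\<close> by simp
    ultimately have "?g (y1 + y2) \<le> norm ((y1 - l1 *\<^sub>R (k1 - x)) + (y2 - l2 *\<^sub>R (k2 - x))) - l * d"
      by metis
    then show ?thesis
      using norm_triangle_ineq[of "y1 - l1 *\<^sub>R (k1 - x)" "y2 - l2 *\<^sub>R (k2 - x)"]
      by (simp add: l_def algebra_simps)
  qed
  note sum_le = this
  have partial_le: "?g (y1 + y2) - (norm (y2 - l2 *\<^sub>R (k2 - x)) - l2 * d) \<le> ?g y1"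
    if l2: "0 \<le> l2" "k2 \<in> K" for l2 k2
  proof (rule separation_gauge_greatest[OF assms(2)])
    fix l1 :: real and k1 assume l1: "0 \<le> l1" "k1 \<in> K"
    from sum_le[OF l1 l2]
    show "?g (y1 + y2) - (norm (y2 - l2 *\<^sub>R (k2 - x)) - l2 * d) \<le> norm (y1 - l1 *\<^sub>R (k1 - x)) - l1 * d"
      by linarith
  qed
  have "?g (y1 + y2) - ?g y1 \<le> ?g y2"
  proof (rule separation_gauge_greatest[OF assms(2)])
    fix l2 :: real and k2 assume "0 \<le> l2" "k2 \<in> K"
    from partial_le[OF this]
    show "?g (y1 + y2) - ?g y1 \<le> norm (y2 - l2 *\<^sub>R (k2 - x)) - l2 * d" by linarith
  qed
  then show ?thesis by simp
qed

lemma separation_gauge_scaleR_le: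
  assumes "K \<noteq> {}" "0 < c"
  shows "separation_gauge K x d (c *\<^sub>R y) \<le> c * separation_gauge K x d y"
proof -
  have "separation_gauge K x d (c *\<^sub>R y) \<le> c * (norm (y - l *\<^sub>R (k - x)) - l * d)"
    if "0 \<le> l" "k \<in> K" for l k
  proof -
    have "c *\<^sub>R y - (c * l) *\<^sub>R (k - x) = c *\<^sub>R (y - l *\<^sub>R (k - x))"
      by (simp add: algebra_simps)
    then have "norm (c *\<^sub>R y - (c * l) *\<^sub>R (k - x)) = c * norm (y - l *\<^sub>R (k - x))"
      using assms(2) by simp
    then show ?thesis
      using separation_gauge_le[of "c * l" k "c *\<^sub>R y"] that assms(2)
      by (simp add: right_diff_distrib)
  qed
  then have "separation_gauge K x d (c *\<^sub>R y) / c \<le> separation_gauge K x d y"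
    using assms by (intro separation_gauge_greatest) (simp_all add: divide_le_eq mult.commute)
  then show ?thesis using assms(2) by (simp add: divide_le_eq mult.commute)
qed

lemma sublinear_separation_gauge:
  assumes "convex K" "K \<noteq> {}"
  shows "sublinear (separation_gauge K x d)"
  unfolding sublinear_def
proof (intro conjI allI impI separation_gauge_add[OF assms])
  fix c :: real and y assume "0 < c"
  have "separation_gauge K x d y \<le> (1 / c) * separation_gauge K x d (c *\<^sub>R y)"
    using separation_gauge_scaleR_le[OF assms(2), of "1 / c" "c *\<^sub>R y"] \<open>0 < c\<close> by simp
  then show "separation_gauge K x d (c *\<^sub>R y) = c * separation_gauge K x d y"
    using separation_gauge_scaleR_le[OF assms(2) \<open>0 < c\<close>, of y] \<open>0 < c\<close>
    by (simp add: field_simps)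
qed

end

lemma separating_functional:
  fixes K :: "'a::real_normed_vector set"
  assumes "convex K" and far: "\<forall>k\<in>K. d \<le> norm (k - x)"
  shows "\<exists>h::'a \<Rightarrow>\<^sub>L real. norm h \<le> 1 \<and> (\<forall>k\<in>K. blinfun_apply h k \<le> blinfun_apply h x - d)"
proof (cases "K = {}")
  case True
  then show ?thesis by (intro exI[of _ 0]) auto
next
  case False
  obtain f where "linear f" and f: "\<And>y. f y \<le> separation_gauge K x d y"
    using sublinear_dominates_linear[OF sublinear_separation_gauge[OF far assms(1) False]] by blast
  have f_norm: "\<bar>f y\<bar> \<le> norm y" for y
  proof -
    have "f y \<le> norm y" "f (- y) \<le> norm (- y)"
      using f separation_gauge_le_norm[OF far False] order_trans by blast+
    then show ?thesis using linear_neg[OF \<open>linear f\<close>, of y] by simp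
  qed
  have "bounded_linear f"
    using \<open>linear f\<close> f_norm by (intro bounded_linear_intro[of f 1]) (auto simp: linear_add linear_scale)
  then have h: "blinfun_apply (Blinfun f) = f" by (rule bounded_linear_Blinfun_apply)
  have "norm (Blinfun f) \<le> 1" by (rule norm_blinfun_bound) (use f_norm h in auto)
  moreover have "f k \<le> f x - d" if "k \<in> K" for k
    using f[of "k - x"] separation_gauge_direction[OF far that] linear_diff[OF \<open>linear f\<close>] by fastforce
  ultimately show ?thesis using h by metis
qed

section \<open>Slices of closed convex hulls\<close>

lemma closure_convex_hull_subset_halfspace:
  fixes h :: "'a::real_normed_vector \<Rightarrow>\<^sub>L real"
  assumes "\<forall>s\<in>S. blinfun_apply h s \<le> t"
  shows "closure (convex hull S) \<subseteq> {y. blinfun_apply h y \<le> t}"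
proof (rule closure_minimal)
  have "convex (blinfun_apply h -` {..t})"
    by (rule convex_linear_vimage) (simp_all add: bounded_linear.linear[OF blinfun.bounded_linear_right])
  then show "convex hull S \<subseteq> {y. blinfun_apply h y \<le> t}"
    using assms by (intro hull_minimal) (auto simp: vimage_def)
  show "closed {y. blinfun_apply h y \<le> t}"
    by (intro closed_Collect_le continuous_intros)
qed

lemma bdd_above_blinfun_image:
  fixes h :: "'a::real_normed_vector \<Rightarrow>\<^sub>L real"
  shows "bounded C \<Longrightarrow> bdd_above (blinfun_apply h ` C)"
  by (intro bounded_imp_bdd_above bounded_linear_image blinfun.bounded_linear_right)

lemma SUP_closure_convex_hull:
  fixes h :: "'a::real_normed_vector \<Rightarrow>\<^sub>L real"
  assumes "bounded A" "A \<noteq> {}"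
  shows "(SUP x\<in>closure (convex hull A). blinfun_apply h x) = (SUP x\<in>A. blinfun_apply h x)"
proof (rule antisym)
  have "\<forall>s\<in>A. blinfun_apply h s \<le> (SUP x\<in>A. blinfun_apply h x)"
    using bdd_above_blinfun_image[OF assms(1)] by (auto intro: cSUP_upper)
  from closure_convex_hull_subset_halfspace[OF this]
  show "(SUP x\<in>closure (convex hull A). blinfun_apply h x) \<le> (SUP x\<in>A. blinfun_apply h x)"
    using assms(2) by (intro cSUP_least) auto
  show "(SUP x\<in>A. blinfun_apply h x) \<le> (SUP x\<in>closure (convex hull A). blinfun_apply h x)"
    using assms hull_subset[of A convex] closure_subset[of "convex hull A"]
    by (intro cSUP_subset_mono bdd_above_blinfun_image bounded_closure bounded_convex_hull) auto
qed

lemma slice_subset: "slice f E \<delta> \<subseteq> E"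
  unfolding slice_def by blast

lemma slice_mono: "\<delta>1 \<le> \<delta>2 \<Longrightarrow> slice f E \<delta>1 \<subseteq> slice f E \<delta>2"
  unfolding slice_def by auto

lemma slice_Int_eq_empty:
  assumes "\<forall>w\<in>W. blinfun_apply f w \<le> (SUP x\<in>E. blinfun_apply f x) - \<delta>"
  shows "slice f E \<delta> \<inter> W = {}"
proof -
  have "e \<notin> W" if "e \<in> slice f E \<delta>" for e
    using that assms unfolding slice_def by force
  then show ?thesis by blast
qed

lemma slice_closure_convex_hull_meets:
  fixes A :: "'a::real_normed_vector set"
  assumes "bounded A" "A \<noteq> {}" "0 < \<delta>"
  shows "A \<inter> slice f (closure (convex hull A)) \<delta> \<noteq> {}"
proof -
  have "(SUP x\<in>A. blinfun_apply f x) - \<delta> < (SUP x\<in>A. blinfun_apply f x)"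
    using assms(3) by simp
  then obtain a where "a \<in> A" "(SUP x\<in>A. blinfun_apply f x) - \<delta> < blinfun_apply f a"
    using less_cSUP_iff[OF assms(2) bdd_above_blinfun_image[OF assms(1)]] by blast
  moreover have "a \<in> closure (convex hull A)"
    using \<open>a \<in> A\<close> hull_subset[of A convex] closure_subset[of "convex hull A"] by blast
  ultimately have "a \<in> slice f (closure (convex hull A)) \<delta>"
    unfolding slice_def SUP_closure_convex_hull[OF assms(1,2)] by simp
  with \<open>a \<in> A\<close> show ?thesis by blast
qed

lemma separating_slice:
  fixes C W :: "'a::real_normed_vector set"
  assumes "bounded C" "x \<in> C" "x \<notin> closure (convex hull W)"
  shows "\<exists>h \<beta>. norm h \<le> 1 \<and> 0 < \<beta> \<and> x \<in> slice h C \<beta> \<and>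
    (\<forall>w\<in>W. blinfun_apply h w \<le> (SUP c\<in>C. blinfun_apply h c) - \<beta>)"
proof -
  obtain e where "0 < e" and far: "\<forall>k\<in>convex hull W. e \<le> norm (k - x)"
    using assms(3) unfolding closure_approachable by (auto simp: dist_norm not_less)
  obtain h where h: "norm h \<le> 1" "\<forall>k\<in>convex hull W. blinfun_apply h k \<le> blinfun_apply h x - e"
    using separating_functional[OF convex_convex_hull far] by blast
  define M where "M = (SUP c\<in>C. blinfun_apply h c)"
  have "blinfun_apply h x \<le> M"
    unfolding M_def using assms(2) bdd_above_blinfun_image[OF assms(1)] by (rule cSUP_upper)
  then have "0 < M - (blinfun_apply h x - e)" using \<open>0 < e\<close> by simp
  moreover have "x \<in> slice h C (M - (blinfun_apply h x - e))"
    unfolding slice_def M_def[symmetric] using assms(2) \<open>0 < e\<close> by simp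
  moreover have "\<forall>w\<in>W. blinfun_apply h w \<le> M - (M - (blinfun_apply h x - e))"
    using h(2) hull_inc by fastforce
  ultimately show ?thesis using h(1) unfolding M_def by blast
qed

lemma slice_subset_or_closure_convex_hull_diff:
  fixes C U :: "'a::real_normed_vector set"
  assumes "bounded C"
  shows "(\<exists>g \<beta>. norm g \<le> 1 \<and> 0 < \<beta> \<and> slice g C \<beta> \<subseteq> U) \<or> C \<subseteq> closure (convex hull (C - U))"
proof (rule disjCI)
  assume "\<not> C \<subseteq> closure (convex hull (C - U))"
  then obtain x where x: "x \<in> C" "x \<notin> closure (convex hull (C - U))" by blast
  obtain g :: "'a \<Rightarrow>\<^sub>L real" and \<beta> where g: "norm g \<le> 1" "0 < \<beta>"
    and below: "\<forall>w\<in>C - U. blinfun_apply g w \<le> (SUP c\<in>C. blinfun_apply g c) - \<beta>"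
    using separating_slice[OF assms x] by auto
  have "slice g C \<beta> \<subseteq> U"
    using slice_Int_eq_empty[OF below] slice_subset by blast
  then show "\<exists>g \<beta>. norm g \<le> 1 \<and> 0 < \<beta> \<and> slice g C \<beta> \<subseteq> U" using g by blast
qed

lemma slice_not_subset_closure_convex_hull_diff:
  fixes C :: "'a::real_normed_vector set"
  assumes "slice h C \<beta> \<noteq> {}"
  shows "\<not> C \<subseteq> closure (convex hull (C - slice h C \<beta>))"
proof
  assume C: "C \<subseteq> closure (convex hull (C - slice h C \<beta>))"
  obtain x where x: "x \<in> slice h C \<beta>" using assms by blast
  have "\<forall>s\<in>C - slice h C \<beta>. blinfun_apply h s \<le> (SUP c\<in>C. blinfun_apply h c) - \<beta>"
    unfolding slice_def by auto
  from closure_convex_hull_subset_halfspace[OF this] C x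
  have "blinfun_apply h x \<le> (SUP c\<in>C. blinfun_apply h c) - \<beta>"
    using slice_subset by blast
  with x show False unfolding slice_def by simp
qed

lemma diameter_convex_hull:
  fixes X :: "'a::real_normed_vector set"
  assumes "bounded X"
  shows "diameter (convex hull X) = diameter X"
proof (rule antisym)
  have X_cball: "convex hull X \<subseteq> cball a (diameter X)" if "a \<in> X" for a
    using diameter_bounded_bound[OF assms that] by (intro hull_minimal) (auto simp: subset_iff)
  have "convex hull X \<subseteq> cball u (diameter X)" if "u \<in> convex hull X" for u
    using X_cball that by (intro hull_minimal) (auto simp: dist_commute subset_iff)
  then show "diameter (convex hull X) \<le> diameter X"
    using diameter_ge_0[OF assms] by (intro diameter_le) (auto simp: dist_norm subset_iff)
  show "diameter X \<le> diameter (convex hull X)"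
    using assms by (intro diameter_subset hull_subset bounded_convex_hull)
qed

text \<open>The points \<open>c\<close> satisfying the conclusion form a convex set containing \<open>X \<union> W\<close>.\<close>
lemma convex_hull_Un_near_convex_hull:
  fixes h :: "'a::real_normed_vector \<Rightarrow>\<^sub>L real"
  assumes "X \<noteq> {}" "0 < \<Delta>" "0 \<le> r"
    and X: "\<forall>x\<in>X. blinfun_apply h x \<le> M" and W: "\<forall>w\<in>W. blinfun_apply h w \<le> M - \<Delta>"
    and r: "\<forall>x\<in>X. \<forall>w\<in>W. norm (w - x) \<le> r"
    and c: "c \<in> convex hull (X \<union> W)"
  shows "\<exists>u\<in>convex hull X. norm (c - u) \<le> r / \<Delta> * (M - blinfun_apply h c)"
proof -
  define K where "K = r / \<Delta>"
  have "0 \<le> K" unfolding K_def using assms(2,3) by simp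
  define Q where "Q = {c. \<exists>u\<in>convex hull X. norm (c - u) \<le> K * (M - blinfun_apply h c)}"
  have "convex Q"
  proof (rule convexI)
    fix c1 c2 and s t :: real
    assume "c1 \<in> Q" "c2 \<in> Q" and st: "0 \<le> s" "0 \<le> t" "s + t = 1"
    then obtain u1 u2 where u: "u1 \<in> convex hull X" "norm (c1 - u1) \<le> K * (M - blinfun_apply h c1)"
      "u2 \<in> convex hull X" "norm (c2 - u2) \<le> K * (M - blinfun_apply h c2)"
      unfolding Q_def by blast
    have "norm ((s *\<^sub>R c1 + t *\<^sub>R c2) - (s *\<^sub>R u1 + t *\<^sub>R u2))
        = norm (s *\<^sub>R (c1 - u1) + t *\<^sub>R (c2 - u2))"
      by (simp add: algebra_simps)
    also have "\<dots> \<le> s * norm (c1 - u1) + t * norm (c2 - u2)"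
      using norm_triangle_ineq[of "s *\<^sub>R (c1 - u1)" "t *\<^sub>R (c2 - u2)"] st by simp
    also have "\<dots> \<le> s * (K * (M - blinfun_apply h c1)) + t * (K * (M - blinfun_apply h c2))"
      using st u by (intro add_mono mult_left_mono) auto
    also have "\<dots> = K * ((s + t) * M - (s * blinfun_apply h c1 + t * blinfun_apply h c2))"
      by (simp add: algebra_simps)
    also have "\<dots> = K * (M - blinfun_apply h (s *\<^sub>R c1 + t *\<^sub>R c2))"
      using st(3) by (simp add: blinfun.add_right blinfun.scaleR_right)
    finally show "s *\<^sub>R c1 + t *\<^sub>R c2 \<in> Q"
      unfolding Q_def using convexD[OF convex_convex_hull u(1,3) st] by blast
  qed
  moreover have "X \<subseteq> Q"
  proof
    fix x assume "x \<in> X"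
    then have "norm (x - x) \<le> K * (M - blinfun_apply h x)" using X \<open>0 \<le> K\<close> by simp
    then show "x \<in> Q" unfolding Q_def using hull_inc[OF \<open>x \<in> X\<close>] by blast
  qed
  moreover have "W \<subseteq> Q"
  proof
    fix w assume "w \<in> W"
    obtain x where "x \<in> X" using assms(1) by blast
    have "norm (w - x) \<le> K * \<Delta>" using r \<open>w \<in> W\<close> \<open>x \<in> X\<close> assms(2) by (simp add: K_def)
    also have "\<dots> \<le> K * (M - blinfun_apply h w)"
      using W \<open>w \<in> W\<close> \<open>0 \<le> K\<close> by (intro mult_left_mono) auto
    finally show "w \<in> Q" unfolding Q_def using hull_inc[OF \<open>x \<in> X\<close>] by blast
  qed
  ultimately have "convex hull (X \<union> W) \<subseteq> Q" by (intro hull_minimal) blast+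
  then show ?thesis using c unfolding Q_def K_def by blast
qed

lemma diameter_closure_Int_open:
  fixes S U :: "'a::real_normed_vector set"
  assumes "bounded S" "open U"
  shows "diameter (closure S \<inter> U) \<le> diameter (S \<inter> U)"
proof -
  have "bounded (S \<inter> U)" using assms(1) by (simp add: bounded_Int)
  have "closure S \<inter> U \<subseteq> closure (S \<inter> U)"
    using open_Int_closure_subset[OF assms(2), of S] by (simp add: Int_commute)
  then have "diameter (closure S \<inter> U) \<le> diameter (closure (S \<inter> U))"
    using \<open>bounded (S \<inter> U)\<close> by (intro diameter_subset bounded_closure)
  also have "\<dots> = diameter (S \<inter> U)" using \<open>bounded (S \<inter> U)\<close> by (rule diameter_closure)
  finally show ?thesis .
qed

lemma diameter_upper_part_convex_hull:
  fixes h :: "'a::real_normed_vector \<Rightarrow>\<^sub>L real"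
  assumes "bounded (X \<union> W)" "0 < \<Delta>"
    and X: "\<forall>x\<in>X. blinfun_apply h x \<le> M" and W: "\<forall>w\<in>W. blinfun_apply h w \<le> M - \<Delta>"
    and "diameter X < \<epsilon>"
  shows "\<exists>\<beta>>0. diameter (convex hull (X \<union> W) \<inter> {c. M - \<beta> < blinfun_apply h c}) \<le> \<epsilon>"
proof (cases "X = {}")
  case True
  then have "convex hull (X \<union> W) \<inter> {c. M - \<Delta> < blinfun_apply h c} = {}"
    using closure_convex_hull_subset_halfspace[OF W] closure_subset by force
  then show ?thesis using assms(2,5) True by auto
next
  case False
  obtain R where "0 < R" and R: "\<forall>y\<in>X \<union> W. norm y \<le> R"
    using assms(1) unfolding bounded_pos by blast
  have "bounded X" using bounded_subset[OF assms(1)] by blast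
  define \<eta> where "\<eta> = (\<epsilon> - diameter X) / 2"
  define \<beta> where "\<beta> = \<eta> * \<Delta> / (2 * R)"
  have "0 < \<eta>" "0 < \<beta>" using assms(2,5) \<open>0 < R\<close> by (simp_all add: \<eta>_def \<beta>_def)
  define P where "P = convex hull (X \<union> W) \<inter> {c. M - \<beta> < blinfun_apply h c}"
  have near: "\<exists>u\<in>convex hull X. dist c u < \<eta>" if "c \<in> P" for c
  proof -
    have "norm (w - x) \<le> 2 * R" if "x \<in> X" "w \<in> W" for x w
    proof -
      have "norm w \<le> R" "norm x \<le> R" using R that by auto
      then show ?thesis using norm_triangle_ineq4[of w x] by linarith
    qed
    moreover have "c \<in> convex hull (X \<union> W)" using that unfolding P_def by blast
    moreover have "0 \<le> 2 * R" using \<open>0 < R\<close> by simp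
    ultimately obtain u where u: "u \<in> convex hull X" "norm (c - u) \<le> 2 * R / \<Delta> * (M - blinfun_apply h c)"
      using convex_hull_Un_near_convex_hull[OF False assms(2) _ X W] by blast
    moreover have "2 * R / \<Delta> * (M - blinfun_apply h c) < 2 * R / \<Delta> * \<beta>"
      using that \<open>0 < R\<close> assms(2) unfolding P_def by (intro mult_strict_left_mono) auto
    moreover have "2 * R / \<Delta> * \<beta> = \<eta>"
      using \<open>0 < R\<close> assms(2) by (simp add: \<beta>_def)
    ultimately have "dist c u < \<eta>" using u(2) by (simp add: dist_norm)
    then show ?thesis using u(1) by blast
  qed
  have "diameter P \<le> \<epsilon>"
  proof (rule diameter_le)
    show "P \<noteq> {} \<or> 0 \<le> \<epsilon>"
      using assms(5) diameter_ge_0[OF \<open>bounded X\<close>] by simp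
    fix c c' assume "c \<in> P" "c' \<in> P"
    then obtain u u' where u: "u \<in> convex hull X" "dist c u < \<eta>" "u' \<in> convex hull X" "dist c' u' < \<eta>"
      using near by blast
    have "dist u u' \<le> diameter X"
      using diameter_bounded_bound[OF bounded_convex_hull[OF \<open>bounded X\<close>] u(1,3)]
      unfolding diameter_convex_hull[OF \<open>bounded X\<close>] .
    moreover have "dist c c' \<le> dist c u + dist u u' + dist c' u'"
      using dist_triangle[of c c' u] dist_triangle[of u c' u'] by (simp add: dist_commute)
    ultimately show "norm (c - c') \<le> \<epsilon>" using u(2,4) by (simp add: dist_norm \<eta>_def)
  qed
  then show ?thesis using \<open>0 < \<beta>\<close> unfolding P_def by blast
qed

lemma diameter_upper_part_closure_convex_hull:
  fixes h :: "'a::real_normed_vector \<Rightarrow>\<^sub>L real"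
  assumes "bounded (X \<union> W)" "0 < \<Delta>"
    and "\<forall>x\<in>X. blinfun_apply h x \<le> M" "\<forall>w\<in>W. blinfun_apply h w \<le> M - \<Delta>"
    and "diameter X < \<epsilon>"
  shows "\<exists>\<beta>>0. diameter (closure (convex hull (X \<union> W)) \<inter> {c. M - \<beta> < blinfun_apply h c}) \<le> \<epsilon>"
proof -
  obtain \<beta> where "0 < \<beta>"
    and "diameter (convex hull (X \<union> W) \<inter> {c. M - \<beta> < blinfun_apply h c}) \<le> \<epsilon>"
    using diameter_upper_part_convex_hull[OF assms] by blast
  moreover have "open {c. M - \<beta> < blinfun_apply h c}"
    by (intro open_Collect_less continuous_intros)
  ultimately show ?thesis
    using diameter_closure_Int_open[OF bounded_convex_hull[OF assms(1)]] order_trans by blast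
qed

section \<open>Sets of small diameter do not span a non-dentable set\<close>

lemma closure_convex_hull_Un_small_subset:
  fixes A :: "'a::real_normed_vector set"
  assumes A: "bounded A" "A \<noteq> {}" "non_dentable \<epsilon> A"
    and X: "X \<subseteq> closure (convex hull A)" "diameter X < \<epsilon>"
    and W: "W \<subseteq> closure (convex hull A)"
    and spanned: "closure (convex hull A) \<subseteq> closure (convex hull (X \<union> W))"
  shows "closure (convex hull A) \<subseteq> closure (convex hull W)"
proof (rule subsetI, rule ccontr)
  let ?C = "closure (convex hull A)"
  have "bounded ?C" using A(1) by (intro bounded_closure bounded_convex_hull)
  fix z assume "z \<in> ?C" "z \<notin> closure (convex hull W)"
  then obtain h :: "'a \<Rightarrow>\<^sub>L real" and \<Delta> where "norm h \<le> 1" "0 < \<Delta>"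
    and h_W: "\<forall>w\<in>W. blinfun_apply h w \<le> (SUP c\<in>?C. blinfun_apply h c) - \<Delta>"
    using separating_slice[OF \<open>bounded ?C\<close>] by blast
  have h_X: "\<forall>x\<in>X. blinfun_apply h x \<le> (SUP c\<in>?C. blinfun_apply h c)"
    using X(1) bdd_above_blinfun_image[OF \<open>bounded ?C\<close>] by (auto intro: cSUP_upper)
  have "bounded (X \<union> W)" using X(1) W \<open>bounded ?C\<close> by (auto intro: bounded_subset)
  then obtain \<beta> where "0 < \<beta>" and small:
    "diameter (closure (convex hull (X \<union> W)) \<inter> {c. (SUP c\<in>?C. blinfun_apply h c) - \<beta> < blinfun_apply h c}) \<le> \<epsilon>"
    using diameter_upper_part_closure_convex_hull[OF _ \<open>0 < \<Delta>\<close> h_X h_W X(2)] by blast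
  have "slice h A \<beta> \<subseteq> closure (convex hull (X \<union> W)) \<inter> {c. (SUP c\<in>?C. blinfun_apply h c) - \<beta> < blinfun_apply h c}"
    using spanned hull_subset[of A convex] closure_subset[of "convex hull A"]
    unfolding slice_def SUP_closure_convex_hull[OF A(1,2)] by blast
  moreover have "bounded (closure (convex hull (X \<union> W)) \<inter> {c. (SUP c\<in>?C. blinfun_apply h c) - \<beta> < blinfun_apply h c})"
    using \<open>bounded (X \<union> W)\<close> by (simp add: bounded_Int bounded_closure bounded_convex_hull)
  ultimately have "diameter (slice h A \<beta>) \<le> \<epsilon>"
    using small diameter_subset order.trans by blast
  moreover have "is_slice (slice h A \<beta>) A"
    unfolding is_slice_def using \<open>norm h \<le> 1\<close> \<open>0 < \<beta>\<close> by blast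
  ultimately show False using A(3) unfolding non_dentable_def by fastforce
qed

lemma closure_convex_hull_Un_Union_small_subset:
  fixes A :: "'a::real_normed_vector set"
  assumes A: "bounded A" "A \<noteq> {}" "non_dentable \<epsilon> A"
    and F: "finite F" "\<forall>X\<in>F. X \<subseteq> closure (convex hull A) \<and> diameter X < \<epsilon>"
    and W: "W \<subseteq> closure (convex hull A)"
    and spanned: "closure (convex hull A) \<subseteq> closure (convex hull (W \<union> \<Union>F))"
  shows "closure (convex hull A) \<subseteq> closure (convex hull W)"
  using F spanned
proof (induction F rule: finite_induct)
  case empty
  then show ?case by simp
next
  case (insert X F)
  have X: "X \<subseteq> closure (convex hull A)" "diameter X < \<epsilon>" using insert.prems(1) by auto
  have "W \<union> \<Union>F \<subseteq> closure (convex hull A)" using insert.prems(1) W by blast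
  moreover have "closure (convex hull A) \<subseteq> closure (convex hull (X \<union> (W \<union> \<Union>F)))"
    using insert.prems(2) by (simp add: Un_left_commute)
  ultimately have "closure (convex hull A) \<subseteq> closure (convex hull (W \<union> \<Union>F))"
    by (rule closure_convex_hull_Un_small_subset[OF A X])
  then show ?case using insert.IH insert.prems(1) by blast
qed

lemma kuratowski_less_imp_finite_cover:
  fixes D :: "'a::real_normed_vector set"
  assumes "bounded D" "kuratowski D < \<epsilon>"
  shows "\<exists>F. finite F \<and> D \<subseteq> \<Union>F \<and> (\<forall>T\<in>F. bounded T \<and> diameter T < \<epsilon>)"
proof -
  define E where "E = {e. e > 0 \<and> (\<exists>F. finite F \<and> D \<subseteq> \<Union>F \<and> (\<forall>T\<in>F. bounded T \<and> diameter T \<le> e))}"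
  have "diameter D + 1 \<in> E"
    unfolding E_def using assms(1) diameter_ge_0[OF assms(1)]
    by (intro CollectI conjI exI[of _ "{D}"]) auto
  moreover have "Inf E < \<epsilon>" using assms(2) unfolding kuratowski_def E_def .
  ultimately obtain e where "e \<in> E" "e < \<epsilon>" using cInf_lessD[of E] by blast
  then obtain F where "finite F" "D \<subseteq> \<Union>F" "\<forall>T\<in>F. bounded T \<and> diameter T \<le> e"
    unfolding E_def by blast
  then show ?thesis using \<open>e < \<epsilon>\<close> by (intro exI[of _ F]) auto
qed

lemma closure_convex_hull_Un_kuratowski_small_subset:
  fixes A :: "'a::real_normed_vector set"
  assumes A: "bounded A" "A \<noteq> {}" "non_dentable \<epsilon> A"
    and D: "D \<subseteq> closure (convex hull A)" "kuratowski D < \<epsilon>"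
    and W: "W \<subseteq> closure (convex hull A)"
    and spanned: "closure (convex hull A) \<subseteq> closure (convex hull (W \<union> D))"
  shows "closure (convex hull A) \<subseteq> closure (convex hull W)"
proof -
  have "bounded D"
    using bounded_closure[OF bounded_convex_hull[OF A(1)]] D(1) by (rule bounded_subset)
  then obtain F where F: "finite F" "D \<subseteq> \<Union>F" "\<forall>T\<in>F. bounded T \<and> diameter T < \<epsilon>"
    using kuratowski_less_imp_finite_cover[OF _ D(2)] by blast
  let ?F = "(\<lambda>T. T \<inter> D) ` F"
  have "\<forall>X\<in>?F. X \<subseteq> closure (convex hull A) \<and> diameter X < \<epsilon>"
  proof
    fix X assume "X \<in> ?F"
    then obtain T where "T \<in> F" "X = T \<inter> D" by blast
    then have "diameter X \<le> diameter T" using F(3) by (simp add: diameter_subset)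
    then show "X \<subseteq> closure (convex hull A) \<and> diameter X < \<epsilon>"
      using \<open>T \<in> F\<close> \<open>X = T \<inter> D\<close> F(3) D(1) by fastforce
  qed
  moreover have "\<Union>?F = D" using F(2) by blast
  ultimately show ?thesis
    using closure_convex_hull_Un_Union_small_subset[OF A finite_imageI[OF F(1)] _ W] spanned
    by metis
qed

lemma slice_contains_slice_avoiding:
  fixes A :: "'a::real_normed_vector set"
  assumes A: "bounded A" "A \<noteq> {}" "non_dentable \<epsilon> A"
    and D: "D \<subseteq> closure (convex hull A)" "kuratowski D < \<epsilon>"
    and T: "slice h (closure (convex hull A)) \<beta> \<noteq> {}"
  shows "\<exists>g \<delta>. norm g \<le> 1 \<and> 0 < \<delta> \<and>
    slice g (closure (convex hull A)) \<delta> \<subseteq> slice h (closure (convex hull A)) \<beta> - D"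
proof -
  let ?C = "closure (convex hull A)"
  let ?T = "slice h ?C \<beta>"
  have "\<not> ?C \<subseteq> closure (convex hull ((?C - ?T) \<union> D))"
    using closure_convex_hull_Un_kuratowski_small_subset[OF A D, of "?C - ?T"]
      slice_not_subset_closure_convex_hull_diff[OF T] by blast
  moreover have "closure (convex hull (?C - (?T - D))) \<subseteq> closure (convex hull ((?C - ?T) \<union> D))"
    by (intro closure_mono hull_mono) blast
  ultimately show ?thesis
    using slice_subset_or_closure_convex_hull_diff[of ?C "?T - D"] A(1)
    by (meson bounded_closure bounded_convex_hull order.trans)
qed

theorem lemma2:
  fixes A D S0 :: "'a::banach set" and \<epsilon> \<gamma> :: real
  assumes "\<epsilon> > 0"
    and "bounded A" and "A \<noteq> {}" and "non_dentable \<epsilon> A"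
    and "is_slice S0 (closure (convex hull A))"
    and "D \<subseteq> closure (convex hull A)" and "kuratowski D < \<epsilon>"
    and "0 < \<gamma>" and "\<gamma> < 1"
  shows "closure (convex hull A) =
    closure (convex hull ((closure (convex hull A) - S0) \<union>
      (shallow_union (closure (convex hull A)) S0 D \<gamma> \<inter> A)))"
proof -
  let ?C = "closure (convex hull A)"
  let ?W = "(?C - S0) \<union> (shallow_union ?C S0 D \<gamma> \<inter> A)"
  have "bounded ?C" using assms(2) by (intro bounded_closure bounded_convex_hull)
  have "?W \<subseteq> ?C" unfolding shallow_union_def slice_def by blast
  then have "closure (convex hull ?W) \<subseteq> ?C"
    by (intro closure_minimal hull_minimal) (auto simp: convex_closure)
  moreover have "?C \<subseteq> closure (convex hull ?W)"
  proof (rule subsetI, rule ccontr)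
    fix x assume "x \<in> ?C" "x \<notin> closure (convex hull ?W)"
    then obtain h :: "'a \<Rightarrow>\<^sub>L real" and \<beta> where "x \<in> slice h ?C \<beta>"
      and below: "\<forall>w\<in>?W. blinfun_apply h w \<le> (SUP c\<in>?C. blinfun_apply h c) - \<beta>"
      using separating_slice[OF \<open>bounded ?C\<close>] by blast
    from slice_Int_eq_empty[OF below] have T_W: "slice h ?C \<beta> \<inter> ?W = {}" .
    obtain g \<delta> where g: "norm g \<le> 1" "0 < \<delta>" "slice g ?C \<delta> \<subseteq> slice h ?C \<beta> - D"
      using slice_contains_slice_avoiding[OF assms(2,3,4,6,7)] \<open>x \<in> slice h ?C \<beta>\<close> by blast
    then have "slice g ?C \<delta> \<subseteq> S0 - D" using T_W slice_subset by blast
    then have "slice g ?C (\<gamma> * \<delta> / 2) \<subseteq> shallow_union ?C S0 D \<gamma>"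
      unfolding shallow_union_def using g(1,2) by blast
    moreover obtain a where "a \<in> A" "a \<in> slice g ?C (\<gamma> * \<delta> / 2)"
      using slice_closure_convex_hull_meets[OF assms(2,3), of "\<gamma> * \<delta> / 2" g] g(2) assms(8)
      by auto
    moreover have "slice g ?C (\<gamma> * \<delta> / 2) \<subseteq> slice g ?C \<delta>"
      using g(2) assms(9) by (intro slice_mono) simp
    ultimately show False using T_W g(3) by blast
  qed
  ultimately show ?thesis by blast
qed

end
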